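(* Let $G=(V,E)$ be a simple directed graph with at least one double edge, and let $T^u=p_{\mathrm{SEF}}T^u_{\mathrm{SEF}}+p_{\mathrm{DEM}}T^u_{\mathrm{DEM}}+p_{\mathrm{CP}}T^u_{\mathrm{CP}}+p_{\mathrm{CS}}T^u_{\mathrm{CS}}$ with $(p_{\mathrm{SEF}},p_{\mathrm{DEM}},p_{\mathrm{CP}},p_{\mathrm{CS}})$ a probability vector with positive entries. Then the Markov chain on the state space $\mathcal{G}_0^\infty(G)$ with transition matrix $T^u$ started at $G$ is ergodic (irreducible and aperiodic) and has the uniform distribution on $\mathcal{G}_0^\infty(G)$ as its equilibrium distribution.
   Context: A simple directed graph is $G=(V,E)$ with $V$ finite and $E\subseteq (V\times V)\setminus\{(v,v)\}$. $(i,j)\in E$ is a single edge if $(j,i)\notin E$; an ordered pair $(k,l)$ is a double edge if $(k,l),(l,k)\in E$. $\mathrm{pr}(V,E)=(V,\{\{u,v\}:(u,v)\in E\})$. $\mathcal{G}_0^\infty(G)$ is the set of simple directed graphs on $V$ with the same underlying undirected graph and the same number of directed edges as $G$. A clique is a vertex set in which every two distinct vertices are joined by an edge in some direction; maximal cliques depend only on $\mathrm{pr}(G)$. For a permutation $\pi$, $\pi((i,j))=(\pi(i),\pi(j))$. Moves: $\mathrm{SEF}_{i,j}(V,E)=(V,(E\setminus\{(i,j)\})\cup\{(j,i)\})$ for a single edge $(i,j)$; $\mathrm{DEM}^{k,l}_{i,j}(V,E)=(V,(E\setminus\{(k,l)\})\cup\{(j,i)\})$ for a single edge $(i,j)$ and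 double edge $(k,l)$; for a maximal clique $V_m$ with induced edges $E_m$ and a permutation $\pi$ of $V_m$, $\mathrm{CP}^\pi_m(V,E)=(V,(E\setminus E_m)\cup\pi(E_m))$; for equal-sized maximal cliques $V_1,V_2$ with induced edge sets $E_1,E_2$ and a permutation $\pi$ of $V_1\cup V_2$ with $\pi(V_1)=V_2,\pi(V_2)=V_1$, $\mathrm{CS}^\pi_{V_1,V_2}(V,E)=(V,(E\setminus(E_1\cup E_2))\cup\pi(E_1\cup E_2))$. Transition matrices: $T^u_{\mathrm{SEF}}(H,H')$ = probability that a uniformly drawn single edge $(i,j)$ of $H$ gives $\mathrm{SEF}_{i,j}(H)=H'$; $T^u_{\mathrm{DEM}}(H,H')$ = probability that a uniformly drawn single edge and an independently uniformly drawn double edge of $H$ give $\mathrm{DEM}^{k,l}_{i,j}(H)=H'$ (if a move has no eligible edges in $H$, it leaves $H$ unchanged). Fix a probability distribution $(p_d)$ on the sizes of maximal cliques of $\mathrm{pr}(G)$. $T^u_{\mathrm{CP}}(H,H')$ = probability that drawing $d\sim p_d$, then a maximal clique of size $d$ uniformly, then a permutation of it uniformly, yields $H'$ via CP; $T^u_{\mathrm{CS}}(H,H')$ = probability that drawing $d\sim p_d$, then two maximal cliques $V_1,V_2$ of size $d$ uniformly and independently, then $\pi$ uniformly among permutations of $V_1\cup V_2$ with $\pi(V_1)=V_2,\pi(V_2)=V_1$, yields $H'$ via CS. *)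

theory Defs
  imports Complex_Main "HOL-Combinatorics.Permutations"
begin

text \<open>Since the vertex set is fixed throughout, states of
  the Markov chain are represented by their edge sets.\<close>

definition simple_digraph :: "'a set \<Rightarrow> ('a \<times> 'a) set \<Rightarrow> bool" where
  "simple_digraph V E \<longleftrightarrow> finite V \<and> E \<subseteq> (V \<times> V) - {(v, v) | v. True}"

definition single_edges :: "('a \<times> 'a) set \<Rightarrow> ('a \<times> 'a) set" where
  "single_edges E = {(i, j). (i, j) \<in> E \<and> (j, i) \<notin> E}"

definition double_edges :: "('a \<times> 'a) set \<Rightarrow> ('a \<times> 'a) set" where
  "double_edges E = {(k, l). (k, l) \<in> E \<and> (l, k) \<in> E}"

definition pr_edges :: "('a \<times> 'a) set \<Rightarrow> 'a set set" where
  "pr_edges E = {{u, v} | u v. (u, v) \<in> E}"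

definition G0inf :: "'a set \<Rightarrow> ('a \<times> 'a) set \<Rightarrow> ('a \<times> 'a) set set" where
  "G0inf V E = {E'. simple_digraph V E' \<and> pr_edges E' = pr_edges E \<and> card E' = card E}"

definition is_clique :: "'a set \<Rightarrow> ('a \<times> 'a) set \<Rightarrow> 'a set \<Rightarrow> bool" where
  "is_clique V E C \<longleftrightarrow> C \<subseteq> V \<and> (\<forall>u\<in>C. \<forall>v\<in>C. u \<noteq> v \<longrightarrow> {u, v} \<in> pr_edges E)"

definition is_max_clique :: "'a set \<Rightarrow> ('a \<times> 'a) set \<Rightarrow> 'a set \<Rightarrow> bool" where
  "is_max_clique V E C \<longleftrightarrow> is_clique V E C \<and> \<not> (\<exists>C'. is_clique V E C' \<and> C \<subset> C')"

definition max_cliques :: "'a set \<Rightarrow> ('a \<times> 'a) set \<Rightarrow> 'a set set" where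
  "max_cliques V E = {C. is_max_clique V E C}"

definition max_cliques_of_size :: "'a set \<Rightarrow> ('a \<times> 'a) set \<Rightarrow> nat \<Rightarrow> 'a set set" where
  "max_cliques_of_size V E d = {C \<in> max_cliques V E. card C = d}"

definition clique_sizes :: "'a set \<Rightarrow> ('a \<times> 'a) set \<Rightarrow> nat set" where
  "clique_sizes V E = card ` max_cliques V E"

definition induced_edges :: "('a \<times> 'a) set \<Rightarrow> 'a set \<Rightarrow> ('a \<times> 'a) set" where
  "induced_edges E C = E \<inter> (C \<times> C)"

definition SEF :: "'a \<Rightarrow> 'a \<Rightarrow> ('a \<times> 'a) set \<Rightarrow> ('a \<times> 'a) set" where
  "SEF i j E = (E - {(i, j)}) \<union> {(j, i)}"

definition DEM :: "'a \<Rightarrow> 'a \<Rightarrow> 'a \<Rightarrow> 'a \<Rightarrow> ('a \<times> 'a) set \<Rightarrow> ('a \<times> 'a) set" where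
  "DEM k l i j E = (E - {(k, l)}) \<union> {(j, i)}"

definition CP :: "('a \<Rightarrow> 'a) \<Rightarrow> 'a set \<Rightarrow> ('a \<times> 'a) set \<Rightarrow> ('a \<times> 'a) set" where
  "CP \<pi> C E = (E - induced_edges E C) \<union> map_prod \<pi> \<pi> ` induced_edges E C"

definition CS :: "('a \<Rightarrow> 'a) \<Rightarrow> 'a set \<Rightarrow> 'a set \<Rightarrow> ('a \<times> 'a) set \<Rightarrow> ('a \<times> 'a) set" where
  "CS \<pi> V1 V2 E =
     (E - (induced_edges E V1 \<union> induced_edges E V2))
     \<union> map_prod \<pi> \<pi> ` (induced_edges E V1 \<union> induced_edges E V2)"

definition swap_perms :: "'a set \<Rightarrow> 'a set \<Rightarrow> ('a \<Rightarrow> 'a) set" where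
  "swap_perms V1 V2 = {\<pi>. \<pi> permutes (V1 \<union> V2) \<and> \<pi> ` V1 = V2 \<and> \<pi> ` V2 = V1}"

definition T_SEF :: "('a \<times> 'a) set \<Rightarrow> ('a \<times> 'a) set \<Rightarrow> real" where
  "T_SEF H H' =
     (if single_edges H = {} then (if H' = H then 1 else 0)
      else real (card {(i, j) \<in> single_edges H. SEF i j H = H'}) / real (card (single_edges H)))"

definition T_DEM :: "('a \<times> 'a) set \<Rightarrow> ('a \<times> 'a) set \<Rightarrow> real" where
  "T_DEM H H' =
     (if single_edges H = {} \<or> double_edges H = {} then (if H' = H then 1 else 0)
      else real (card {((i, j), (k, l)) \<in> single_edges H \<times> double_edges H. DEM k l i j H = H'})
           / (real (card (single_edges H)) * real (card (double_edges H))))"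

text \<open>The clique moves use the maximal cliques of pr(G) (which coincide for all states)
  and a probability distribution p on the sizes of maximal cliques.\<close>

definition T_CP :: "'a set \<Rightarrow> ('a \<times> 'a) set \<Rightarrow> (nat \<Rightarrow> real)
                    \<Rightarrow> ('a \<times> 'a) set \<Rightarrow> ('a \<times> 'a) set \<Rightarrow> real" where
  "T_CP V E p H H' =
     (\<Sum>d\<in>clique_sizes V E. p d *
        (\<Sum>C\<in>max_cliques_of_size V E d.
           (1 / real (card (max_cliques_of_size V E d))) *
           (real (card {\<pi>. \<pi> permutes C \<and> CP \<pi> C H = H'}) / real (card {\<pi>. \<pi> permutes C}))))"

definition T_CS :: "'a set \<Rightarrow> ('a \<times> 'a) set \<Rightarrow> (nat \<Rightarrow> real)
                    \<Rightarrow> ('a \<times> 'a) set \<Rightarrow> ('a \<times> 'a) set \<Rightarrow> real" where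
  "T_CS V E p H H' =
     (\<Sum>d\<in>clique_sizes V E. p d *
        (\<Sum>V1\<in>max_cliques_of_size V E d. \<Sum>V2\<in>max_cliques_of_size V E d.
           (1 / real (card (max_cliques_of_size V E d)) ^ 2) *
           (real (card {\<pi> \<in> swap_perms V1 V2. CS \<pi> V1 V2 H = H'})
            / real (card (swap_perms V1 V2)))))"

definition T_u :: "'a set \<Rightarrow> ('a \<times> 'a) set \<Rightarrow> (nat \<Rightarrow> real) \<Rightarrow> real \<Rightarrow> real \<Rightarrow> real \<Rightarrow> real
                   \<Rightarrow> ('a \<times> 'a) set \<Rightarrow> ('a \<times> 'a) set \<Rightarrow> real" where
  "T_u V E p pSEF pDEM pCP pCS H H' =
     pSEF * T_SEF H H' + pDEM * T_DEM H H' + pCP * T_CP V E p H H' + pCS * T_CS V E p H H'"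

definition stochastic_on :: "'s set \<Rightarrow> ('s \<Rightarrow> 's \<Rightarrow> real) \<Rightarrow> bool" where
  "stochastic_on S T \<longleftrightarrow> finite S \<and>
     (\<forall>x\<in>S. \<forall>y. T x y \<ge> 0 \<and> (T x y > 0 \<longrightarrow> y \<in> S)) \<and> (\<forall>x\<in>S. (\<Sum>y\<in>S. T x y) = 1)"

fun mat_pow :: "'s set \<Rightarrow> ('s \<Rightarrow> 's \<Rightarrow> real) \<Rightarrow> nat \<Rightarrow> 's \<Rightarrow> 's \<Rightarrow> real" where
  "mat_pow S T 0 x y = (if x = y then 1 else 0)"
| "mat_pow S T (Suc n) x y = (\<Sum>z\<in>S. mat_pow S T n x z * T z y)"

definition irreducible_chain :: "'s set \<Rightarrow> ('s \<Rightarrow> 's \<Rightarrow> real) \<Rightarrow> bool" where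
  "irreducible_chain S T \<longleftrightarrow> (\<forall>x\<in>S. \<forall>y\<in>S. \<exists>n. mat_pow S T n x y > 0)"

definition aperiodic_chain :: "'s set \<Rightarrow> ('s \<Rightarrow> 's \<Rightarrow> real) \<Rightarrow> bool" where
  "aperiodic_chain S T \<longleftrightarrow> (\<forall>x\<in>S. Gcd {n. n \<ge> 1 \<and> mat_pow S T n x x > 0} = 1)"

definition ergodic_chain :: "'s set \<Rightarrow> ('s \<Rightarrow> 's \<Rightarrow> real) \<Rightarrow> bool" where
  "ergodic_chain S T \<longleftrightarrow> irreducible_chain S T \<and> aperiodic_chain S T"

definition stationary_distribution :: "'s set \<Rightarrow> ('s \<Rightarrow> 's \<Rightarrow> real) \<Rightarrow> ('s \<Rightarrow> real) \<Rightarrow> bool" where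
  "stationary_distribution S T \<mu> \<longleftrightarrow>
     (\<forall>x\<in>S. \<mu> x \<ge> 0) \<and> (\<Sum>x\<in>S. \<mu> x) = 1 \<and> (\<forall>y\<in>S. (\<Sum>x\<in>S. \<mu> x * T x y) = \<mu> y)"

end

theory Submission
  imports Defs
begin

text \<open>Each of the four moves is drawn uniformly from a set of moves of the current state,
  and every move can be undone by a move of the same kind: flip the edge back, turn the new
  double edge back into the old one, apply the inverse permutation. These move sets have the
  same size in every state, so the transition matrix is symmetric and the uniform distribution
  is stationary. The identity permutation of a clique gives every state a self-loop, hence
  aperiodicity. For irreducibility, let x \<noteq> y and take an edge (a, b) of x that y lacks;
  then (b, a) is a single edge of y. If (b, a) \<notin> x, flipping it brings y one edge closer
  to x; otherwise (a, b) is a double edge of x but not of y, so y has a double edge that x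
  lacks, and moving one of its halves to (a, b) brings y closer to x. By symmetry each such
  move is also a step of the chain into y.\<close>

section \<open>Finite Markov chains\<close>

definition symmetric_on :: "'s set \<Rightarrow> ('s \<Rightarrow> 's \<Rightarrow> real) \<Rightarrow> bool" where
  "symmetric_on S T \<longleftrightarrow> (\<forall>x\<in>S. \<forall>y\<in>S. T x y = T y x)"

lemma stochastic_onD:
  assumes "stochastic_on S T"
  shows "finite S" "x \<in> S \<Longrightarrow> T x y \<ge> 0" "x \<in> S \<Longrightarrow> T x y > 0 \<Longrightarrow> y \<in> S"
    "x \<in> S \<Longrightarrow> (\<Sum>y\<in>S. T x y) = 1"
  using assms unfolding stochastic_on_def by auto

lemma mat_pow_nonneg:
  assumes "stochastic_on S T"
  shows "mat_pow S T n x y \<ge> 0"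
  by (induction n arbitrary: y)
    (auto intro!: sum_nonneg mult_nonneg_nonneg stochastic_onD(2)[OF assms])

lemma mat_pow_Suc_pos:
  assumes T: "stochastic_on S T" and "mat_pow S T n x z > 0" "z \<in> S" "T z y > 0"
  shows "mat_pow S T (Suc n) x y > 0"
proof -
  have "0 < (\<Sum>w\<in>S. mat_pow S T n x w * T w y)"
    using assms by (intro sum_pos2[of S z])
      (auto intro!: mult_nonneg_nonneg mat_pow_nonneg stochastic_onD(1,2)[OF T])
  then show ?thesis by simp
qed

lemma irreducible_chainI_descent:
  fixes d :: "'s \<Rightarrow> 's \<Rightarrow> nat"
  assumes T: "stochastic_on S T"
    and descent: "\<And>x y. x \<in> S \<Longrightarrow> y \<in> S \<Longrightarrow> x \<noteq> y \<Longrightarrow> \<exists>z\<in>S. T z y > 0 \<and> d x z < d x y"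
  shows "irreducible_chain S T"
  unfolding irreducible_chain_def
proof (intro ballI)
  fix x y assume x: "x \<in> S" and "y \<in> S"
  then show "\<exists>n. mat_pow S T n x y > 0"
  proof (induction "d x y" arbitrary: y rule: less_induct)
    case less
    show ?case
    proof (cases "x = y")
      case True
      then have "mat_pow S T 0 x y > 0" by simp
      then show ?thesis ..
    next
      case False
      then obtain z where z: "z \<in> S" "T z y > 0" "d x z < d x y"
        using descent[OF x \<open>y \<in> S\<close> False] by blast
      then obtain n where "mat_pow S T n x z > 0" using less.hyps[OF z(3) x z(1)] by blast
      then have "mat_pow S T (Suc n) x y > 0" using mat_pow_Suc_pos[OF T] z by blast
      then show ?thesis ..
    qed
  qed
qed

lemma aperiodic_chainI_self_loops:
  assumes T: "stochastic_on S T" and loops: "\<And>x. x \<in> S \<Longrightarrow> T x x > 0"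
  shows "aperiodic_chain S T"
  unfolding aperiodic_chain_def
proof
  fix x assume x: "x \<in> S"
  have "mat_pow S T 1 x x = (\<Sum>z\<in>S. if z = x then T x x else 0)"
    by (auto intro: sum.cong)
  also have "\<dots> = T x x"
    using x stochastic_onD(1)[OF T] by simp
  finally have "mat_pow S T 1 x x = T x x" .
  then have "1 \<in> {n. n \<ge> 1 \<and> mat_pow S T n x x > 0}" using loops[OF x] by simp
  then show "Gcd {n. n \<ge> 1 \<and> mat_pow S T n x x > 0} = 1"
    using Gcd_dvd by (metis nat_dvd_1_iff_1)
qed

lemma stationary_distribution_uniform:
  assumes T: "stochastic_on S T" and sym: "symmetric_on S T" and "S \<noteq> {}"
  shows "stationary_distribution S T (\<lambda>_. 1 / real (card S))"
  unfolding stationary_distribution_def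
proof (intro conjI ballI)
  show "(\<Sum>x\<in>S. 1 / real (card S)) = 1"
    using assms stochastic_onD(1)[OF T] by simp
next
  fix y assume y: "y \<in> S"
  have "(\<Sum>x\<in>S. 1 / real (card S) * T x y) = 1 / real (card S) * (\<Sum>x\<in>S. T y x)"
    using sym y by (simp add: sum_distrib_left symmetric_on_def)
  then show "(\<Sum>x\<in>S. 1 / real (card S) * T x y) = 1 / real (card S)"
    using stochastic_onD(4)[OF T y] by simp
qed simp

lemma stochastic_on_mixture:
  assumes "finite I" "\<And>i. i \<in> I \<Longrightarrow> w i \<ge> 0" "(\<Sum>i\<in>I. w i) = 1"
    and K: "\<And>i. i \<in> I \<Longrightarrow> stochastic_on S (K i)"
  shows "stochastic_on S (\<lambda>x y. \<Sum>i\<in>I. w i * K i x y)"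
proof -
  obtain i where "i \<in> I" using assms(3) by fastforce
  then have fin: "finite S" using K stochastic_onD(1) by blast
  have "(\<Sum>y\<in>S. \<Sum>i\<in>I. w i * K i x y) = 1" if "x \<in> S" for x
  proof -
    have "(\<Sum>y\<in>S. \<Sum>i\<in>I. w i * K i x y) = (\<Sum>i\<in>I. w i * (\<Sum>y\<in>S. K i x y))"
      by (simp add: sum.swap[of _ S] sum_distrib_left)
    also have "\<dots> = (\<Sum>i\<in>I. w i)"
      using stochastic_onD(4)[OF K that] by simp
    finally show ?thesis using assms(3) by simp
  qed
  moreover have "y \<in> S" if x: "x \<in> S" and pos: "(\<Sum>i\<in>I. w i * K i x y) > 0" for x y
  proof -
    obtain j where "j \<in> I" "w j * K j x y \<noteq> 0"
      using pos by (metis (no_types, lifting) less_irrefl sum.neutral)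
    then show "y \<in> S"
      using K x stochastic_onD(2,3) by (metis less_eq_real_def mult_zero_right)
  qed
  ultimately show ?thesis
    unfolding stochastic_on_def using fin assms(2)
    by (auto intro!: sum_nonneg mult_nonneg_nonneg K[THEN stochastic_onD(2)])
qed

lemma symmetric_on_mixture:
  assumes "\<And>i. i \<in> I \<Longrightarrow> symmetric_on S (K i)"
  shows "symmetric_on S (\<lambda>x y. \<Sum>i\<in>I. w i * K i x y)"
  using assms unfolding symmetric_on_def by (auto intro!: sum.cong)

lemma mixture_pos:
  assumes "finite I" "\<And>j. j \<in> I \<Longrightarrow> w j \<ge> 0" "\<And>j. j \<in> I \<Longrightarrow> stochastic_on S (K j)"
    and "x \<in> S" "i \<in> I" "w i > 0" "K i x y > 0"
  shows "(\<Sum>j\<in>I. w j * K j x y) > 0"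
  using assms by (intro sum_pos2[of I i])
    (auto intro!: mult_nonneg_nonneg assms(3)[THEN stochastic_onD(2)])

section \<open>Kernels applying a uniformly chosen move\<close>

definition move_kernel :: "('s \<Rightarrow> 'l set) \<Rightarrow> ('l \<Rightarrow> 's \<Rightarrow> 's) \<Rightarrow> 's \<Rightarrow> 's \<Rightarrow> real" where
  "move_kernel L f x y =
     (if L x = {} then (if y = x then 1 else 0)
      else real (card {l \<in> L x. f l x = y}) / real (card (L x)))"

lemma stochastic_on_move_kernel:
  assumes fin: "finite S" "\<And>x. x \<in> S \<Longrightarrow> finite (L x)"
    and closed: "\<And>x l. x \<in> S \<Longrightarrow> l \<in> L x \<Longrightarrow> f l x \<in> S"
  shows "stochastic_on S (move_kernel L f)"
  unfolding stochastic_on_def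
proof (intro conjI ballI allI impI)
  fix x assume x: "x \<in> S"
  show "(\<Sum>y\<in>S. move_kernel L f x y) = 1"
  proof (cases "L x = {}")
    case True
    then show ?thesis using x fin by (simp add: move_kernel_def)
  next
    case False
    have "(\<Sum>y\<in>S. real (card {l \<in> L x. f l x = y})) = (\<Sum>y\<in>S. \<Sum>l\<in>{l \<in> L x. f l x = y}. 1)"
      by simp
    also have "\<dots> = (\<Sum>l\<in>L x. 1)"
      by (rule sum.group) (use fin closed x in auto)
    finally have "(\<Sum>y\<in>S. real (card {l \<in> L x. f l x = y})) = real (card (L x))"
      by simp
    then show ?thesis
      using False fin(2)[OF x] by (simp add: move_kernel_def sum_divide_distrib[symmetric])
  qed
  fix y
  show "move_kernel L f x y \<ge> 0" by (simp add: move_kernel_def)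
  assume pos: "move_kernel L f x y > 0"
  show "y \<in> S"
  proof (cases "L x = {}")
    case True
    then show ?thesis using pos x by (simp add: move_kernel_def split: if_splits)
  next
    case False
    with pos have "card {l \<in> L x. f l x = y} \<noteq> 0" by (auto simp: move_kernel_def)
    then have "{l \<in> L x. f l x = y} \<noteq> {}" by force
    then show ?thesis using x closed by blast
  qed
qed (use fin in simp)

lemma symmetric_on_move_kernel:
  assumes fin: "\<And>x. x \<in> S \<Longrightarrow> finite (L x)"
    and card: "\<And>x y. x \<in> S \<Longrightarrow> y \<in> S \<Longrightarrow> card (L x) = card (L y)"
    and inj: "\<And>x. x \<in> S \<Longrightarrow> inj_on r (L x)"
    and reverse: "\<And>x l. x \<in> S \<Longrightarrow> l \<in> L x \<Longrightarrow> r l \<in> L (f l x) \<and> f (r l) (f l x) = x"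
  shows "symmetric_on S (move_kernel L f)"
  unfolding symmetric_on_def
proof (intro ballI)
  have le: "card {l \<in> L x. f l x = y} \<le> card {l \<in> L y. f l y = x}" if "x \<in> S" "y \<in> S" for x y
  proof (rule card_inj_on_le)
    show "inj_on r {l \<in> L x. f l x = y}" using inj[OF \<open>x \<in> S\<close>] by (rule inj_on_subset) blast
    show "r ` {l \<in> L x. f l x = y} \<subseteq> {l \<in> L y. f l y = x}" using reverse[OF \<open>x \<in> S\<close>] by auto
    show "finite {l \<in> L y. f l y = x}" using fin[OF \<open>y \<in> S\<close>] by simp
  qed
  fix x y assume x: "x \<in> S" and y: "y \<in> S"
  have "card {l \<in> L x. f l x = y} = card {l \<in> L y. f l y = x}"
    using le[OF x y] le[OF y x] by (rule antisym)
  moreover have "L x = {} \<longleftrightarrow> L y = {}"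
    using card[OF x y] fin[OF x] fin[OF y] by (metis card_0_eq)
  ultimately show "move_kernel L f x y = move_kernel L f y x"
    unfolding move_kernel_def using card[OF x y] by simp
qed

lemma move_kernel_pos:
  assumes "finite (L x)" "l \<in> L x"
  shows "move_kernel L f x (f l x) > 0"
proof -
  have "card {l' \<in> L x. f l' x = f l x} > 0"
    using assms by (auto simp: card_gt_0_iff)
  then show ?thesis using assms by (auto simp: move_kernel_def card_gt_0_iff)
qed

section \<open>Edge moves\<close>

lemma mem_pr_edges_iff: "{u, v} \<in> pr_edges H \<longleftrightarrow> (u, v) \<in> H \<union> H\<inverse>"
  unfolding pr_edges_def by (auto simp: doubleton_eq_iff)

lemma pr_edges_eq_iff: "pr_edges H = pr_edges H' \<longleftrightarrow> H \<union> H\<inverse> = H' \<union> H'\<inverse>"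
proof
  assume "pr_edges H = pr_edges H'"
  then have "(u, v) \<in> H \<union> H\<inverse> \<longleftrightarrow> (u, v) \<in> H' \<union> H'\<inverse>" for u v
    by (simp only: mem_pr_edges_iff[symmetric])
  then show "H \<union> H\<inverse> = H' \<union> H'\<inverse>" by auto
next
  have pr: "pr_edges G = {{u, v} | u v. (u, v) \<in> G \<union> G\<inverse>}" for G :: "('a \<times> 'a) set"
    unfolding pr_edges_def by (auto simp: insert_commute)
  assume "H \<union> H\<inverse> = H' \<union> H'\<inverse>"
  then show "pr_edges H = pr_edges H'" by (simp only: pr)
qed

lemma double_edges_eq_Int_converse: "double_edges H = H \<inter> H\<inverse>"
  unfolding double_edges_def by auto

lemma single_edges_eq_Diff_converse: "single_edges H = H - H\<inverse>"
  unfolding single_edges_def by auto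

lemma card_double_edges_add_card_sym_closure:
  assumes "finite H"
  shows "card (double_edges H) + card (H \<union> H\<inverse>) = 2 * card H"
  using card_Un_Int[of H "H\<inverse>"] assms by (simp add: double_edges_eq_Int_converse)

lemma SEF_sym_closure:
  assumes "(i, j) \<in> single_edges H"
  shows "SEF i j H \<union> (SEF i j H)\<inverse> = H \<union> H\<inverse>"
  using assms unfolding single_edges_def SEF_def by auto

lemma DEM_sym_closure:
  assumes "(i, j) \<in> single_edges H" "(k, l) \<in> double_edges H" "k \<noteq> l"
  shows "DEM k l i j H \<union> (DEM k l i j H)\<inverse> = H \<union> H\<inverse>"
  using assms unfolding single_edges_def double_edges_def DEM_def by auto

lemma card_SEF:
  assumes "finite H" "(i, j) \<in> single_edges H"
  shows "card (SEF i j H) = card H"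
  using assms card_Suc_Diff1[of H "(i, j)"] unfolding single_edges_def SEF_def by auto

lemma card_DEM:
  assumes "finite H" "(i, j) \<in> single_edges H" "(k, l) \<in> double_edges H"
  shows "card (DEM k l i j H) = card H"
  using assms card_Suc_Diff1[of H "(k, l)"] unfolding single_edges_def double_edges_def DEM_def
  by auto

lemma SEF_reverse:
  assumes "(i, j) \<in> single_edges H"
  shows "(j, i) \<in> single_edges (SEF i j H) \<and> SEF j i (SEF i j H) = H"
  using assms unfolding single_edges_def SEF_def by auto

lemma DEM_reverse:
  assumes "(i, j) \<in> single_edges H" "(k, l) \<in> double_edges H" "k \<noteq> l"
  shows "(l, k) \<in> single_edges (DEM k l i j H) \<and> (j, i) \<in> double_edges (DEM k l i j H)
    \<and> DEM j i l k (DEM k l i j H) = H"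
  using assms unfolding single_edges_def double_edges_def DEM_def by auto

lemma T_SEF_eq_move_kernel: "T_SEF = move_kernel single_edges (\<lambda>(i, j). SEF i j)"
  by (intro ext) (simp add: T_SEF_def move_kernel_def case_prod_unfold)

lemma T_DEM_eq_move_kernel:
  "T_DEM = move_kernel (\<lambda>H. single_edges H \<times> double_edges H) (\<lambda>((i, j), (k, l)). DEM k l i j)"
  by (intro ext) (simp add: T_DEM_def move_kernel_def case_prod_unfold card_cartesian_product mem_Times_iff)

section \<open>Clique moves\<close>

definition relabel_on :: "('a \<Rightarrow> 'a) \<Rightarrow> ('a \<times> 'a) set \<Rightarrow> ('a \<times> 'a) set \<Rightarrow> ('a \<times> 'a) set" where
  "relabel_on \<pi> R H = (H - R) \<union> map_prod \<pi> \<pi> ` (H \<inter> R)"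

lemma CS_eq_relabel_on: "CS \<pi> V1 V2 H = relabel_on \<pi> (V1 \<times> V1 \<union> V2 \<times> V2) H"
proof -
  have "induced_edges H V1 \<union> induced_edges H V2 = H \<inter> (V1 \<times> V1 \<union> V2 \<times> V2)"
    unfolding induced_edges_def by auto
  then show ?thesis unfolding CS_def relabel_on_def by (simp add: Diff_Int)
qed

lemma relabel_on_inv:
  assumes "bij \<pi>" "map_prod \<pi> \<pi> ` R = R"
  shows "relabel_on (inv \<pi>) R (relabel_on \<pi> R H) = H"
proof -
  have "map_prod \<pi> \<pi> ` (H \<inter> R) \<subseteq> R" using assms(2) by blast
  then have "relabel_on \<pi> R H - R = H - R" "relabel_on \<pi> R H \<inter> R = map_prod \<pi> \<pi> ` (H \<inter> R)"
    unfolding relabel_on_def by auto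
  moreover have "map_prod (inv \<pi>) (inv \<pi>) ` map_prod \<pi> \<pi> ` A = A" for A
    using bij_is_inj[OF assms(1)] by (simp add: image_image map_prod_def split_beta)
  ultimately show ?thesis unfolding relabel_on_def by (simp add: Un_Diff_Int)
qed

lemma card_relabel_on:
  assumes "bij \<pi>" "map_prod \<pi> \<pi> ` R = R" "finite H"
  shows "card (relabel_on \<pi> R H) = card H"
proof -
  have inj: "inj (map_prod \<pi> \<pi>)" using bij_is_inj[OF assms(1)] map_prod_inj_on[of \<pi> UNIV \<pi> UNIV] by simp
  have "map_prod \<pi> \<pi> ` (H \<inter> R) \<subseteq> R" using assms(2) by blast
  then have "card (relabel_on \<pi> R H) = card (H - R) + card (map_prod \<pi> \<pi> ` (H \<inter> R))"
    unfolding relabel_on_def using assms(3) by (intro card_Un_disjoint) auto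
  also have "\<dots> = card (H - R) + card (H \<inter> R)"
    using inj by (simp add: card_image inj_on_subset)
  finally show ?thesis using card_Int_Diff[OF assms(3), of R] by simp
qed

lemma irrefl_relabel_on:
  assumes "inj \<pi>" "irrefl H"
  shows "irrefl (relabel_on \<pi> R H)"
  using assms unfolding relabel_on_def irrefl_def by (auto dest: injD)

text \<open>The edges of H inside R, in either direction, are exactly the off-diagonal pairs
  of R, a set that the relabelling permutes.\<close>
lemma relabel_on_sym_closure:
  assumes bij: "bij \<pi>" and R: "map_prod \<pi> \<pi> ` R = R" "sym R" and "irrefl H"
    and complete: "\<And>u v. (u, v) \<in> R \<Longrightarrow> u \<noteq> v \<Longrightarrow> (u, v) \<in> H \<union> H\<inverse>"
  shows "relabel_on \<pi> R H \<union> (relabel_on \<pi> R H)\<inverse> = H \<union> H\<inverse>"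
proof -
  let ?f = "map_prod \<pi> \<pi>"
  have inj: "inj ?f" using bij_is_inj[OF bij] map_prod_inj_on[of \<pi> UNIV \<pi> UNIV] by simp
  have "?f ` Id = Id"
    using bij_is_surj[OF bij] by (auto simp: Id_def image_iff) (metis surj_f_inv_f)
  then have f_off: "?f ` (R - Id) = R - Id" using R(1) by (simp add: image_set_diff[OF inj])
  have off: "(H \<inter> R) \<union> (H \<inter> R)\<inverse> = R - Id"
    using R(2) \<open>irrefl H\<close> complete unfolding sym_def irrefl_def by fast
  have "(?f ` (H \<inter> R)) \<union> (?f ` (H \<inter> R))\<inverse> = ?f ` ((H \<inter> R) \<union> (H \<inter> R)\<inverse>)"
    by (auto simp: image_iff)
  also have "\<dots> = (H \<inter> R) \<union> (H \<inter> R)\<inverse>" by (simp only: off f_off)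
  finally show ?thesis unfolding relabel_on_def by blast
qed

lemma swap_perms_nonempty:
  assumes "finite V1" "finite V2" "card V1 = card V2"
  shows "swap_perms V1 V2 \<noteq> {}"
proof -
  define A where "A = V1 - V2"
  define B where "B = V2 - V1"
  have "card A = card B"
    using assms card_Int_Diff[of V1 V2] card_Int_Diff[of V2 V1] unfolding A_def B_def
    by (simp add: Int_commute)
  then obtain g where g: "bij_betw g A B"
    using assms finite_same_card_bij unfolding A_def B_def by blast
  define h where "h x = (if x \<in> A then g x else inv_into A g x)" for x
  define \<pi> where "\<pi> x = (if x \<in> A \<union> B then h x else x)" for x
  have AB: "A \<inter> B = {}" unfolding A_def B_def by blast
  have "bij_betw h (A \<union> B) (B \<union> A)"
    unfolding h_def using g bij_betw_inv_into[OF g] AB by (intro bij_betw_disjoint_Un) auto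
  then have "bij_betw \<pi> (A \<union> B) (A \<union> B)"
    by (auto simp: \<pi>_def Un_commute intro: bij_betw_cong[THEN iffD1])
  then have "\<pi> permutes (A \<union> B)" by (rule bij_imp_permutes) (simp add: \<pi>_def)
  then have perm: "\<pi> permutes (V1 \<union> V2)" by (rule permutes_subset) (auto simp: A_def B_def)
  have "\<pi> ` A = g ` A" "\<pi> ` B = inv_into A g ` B"
    using AB by (auto simp: \<pi>_def h_def intro!: image_cong)
  then have "\<pi> ` A = B" "\<pi> ` B = A"
    using bij_betw_imp_surj_on[OF g] bij_betw_imp_surj_on[OF bij_betw_inv_into[OF g]] by simp_all
  moreover have "\<pi> ` (V1 \<inter> V2) = V1 \<inter> V2" unfolding \<pi>_def A_def B_def by auto
  moreover have "V1 = A \<union> (V1 \<inter> V2)" "V2 = B \<union> (V1 \<inter> V2)" unfolding A_def B_def by auto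
  ultimately have "\<pi> ` V1 = V2" "\<pi> ` V2 = V1" by (metis image_Un)+
  with perm show ?thesis unfolding swap_perms_def by blast
qed

lemma finite_swap_perms: "finite V1 \<Longrightarrow> finite V2 \<Longrightarrow> finite (swap_perms V1 V2)"
  unfolding swap_perms_def by (rule finite_subset[OF _ finite_permutations[of "V1 \<union> V2"]]) auto

lemma inv_in_swap_perms:
  assumes "\<pi> \<in> swap_perms V1 V2"
  shows "inv \<pi> \<in> swap_perms V1 V2"
proof -
  have perm: "\<pi> permutes (V1 \<union> V2)" and "\<pi> ` V1 = V2" "\<pi> ` V2 = V1"
    using assms unfolding swap_perms_def by auto
  moreover have "inv \<pi> ` \<pi> ` A = A" for A by (rule image_inv_f_f[OF permutes_inj[OF perm]])
  ultimately have "inv \<pi> ` V2 = V1" "inv \<pi> ` V1 = V2" by metis+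
  then show ?thesis unfolding swap_perms_def using permutes_inv[OF perm] by simp
qed

lemma swap_perms_blocks:
  "\<pi> \<in> swap_perms V1 V2 \<Longrightarrow> map_prod \<pi> \<pi> ` (V1 \<times> V1 \<union> V2 \<times> V2) = V1 \<times> V1 \<union> V2 \<times> V2"
  unfolding swap_perms_def image_Un by (auto simp: map_prod_surj_on)

lemma swap_perms_self: "swap_perms C C = {\<pi>. \<pi> permutes C}"
  unfolding swap_perms_def using permutes_image by auto

lemma CP_eq_CS: "CP \<pi> C H = CS \<pi> C C H"
  unfolding CP_def CS_def by simp

definition clique_swap_kernel :: "'a set \<Rightarrow> 'a set \<Rightarrow> ('a \<times> 'a) set \<Rightarrow> ('a \<times> 'a) set \<Rightarrow> real" where
  "clique_swap_kernel V1 V2 = move_kernel (\<lambda>_. swap_perms V1 V2) (\<lambda>\<pi>. CS \<pi> V1 V2)"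

lemma T_CP_eq_mixture:
  "T_CP V E p H H' = (\<Sum>d\<in>clique_sizes V E. p d *
     (\<Sum>C\<in>max_cliques_of_size V E d.
        1 / real (card (max_cliques_of_size V E d)) * clique_swap_kernel C C H H'))"
proof -
  have kernel: "real (card {\<pi>. \<pi> permutes C \<and> CP \<pi> C H = H'}) / real (card {\<pi>. \<pi> permutes C})
      = clique_swap_kernel C C H H'" for C
  proof -
    have "{\<pi>. \<pi> permutes C} \<noteq> {}" using permutes_id by blast
    then show ?thesis
      unfolding clique_swap_kernel_def move_kernel_def swap_perms_self CP_eq_CS if_not_P
      by (simp add: Collect_conj_eq[symmetric])
  qed
  show ?thesis unfolding T_CP_def kernel ..
qed

section \<open>The state space\<close>

locale orientation_space =
  fixes V :: "'a set" and E :: "('a \<times> 'a) set"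
  assumes simple: "simple_digraph V E"
begin

abbreviation states :: "('a \<times> 'a) set set" where
  "states \<equiv> G0inf V E"

lemma finite_V: "finite V"
  using simple unfolding simple_digraph_def by simp

lemma mem_states_iff:
  "H \<in> states \<longleftrightarrow> H \<subseteq> V \<times> V \<and> irrefl H \<and> H \<union> H\<inverse> = E \<union> E\<inverse> \<and> card H = card E"
  unfolding G0inf_def simple_digraph_def pr_edges_eq_iff irrefl_def using finite_V by auto

lemma E_in_states: "E \<in> states"
  using simple unfolding G0inf_def by simp

lemma finite_states: "finite states"
proof -
  have "states \<subseteq> Pow (V \<times> V)" using mem_states_iff by blast
  then show ?thesis using finite_V by (meson finite_Pow_iff finite_SigmaI finite_subset)
qed

lemma finite_state: "H \<in> states \<Longrightarrow> finite H"
  using mem_states_iff finite_V by (meson finite_SigmaI finite_subset)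

lemma finite_single_edges_state: "H \<in> states \<Longrightarrow> finite (single_edges H)"
  using finite_state by (simp add: single_edges_eq_Diff_converse)

lemma finite_double_edges_state: "H \<in> states \<Longrightarrow> finite (double_edges H)"
  using finite_state by (simp add: double_edges_eq_Int_converse)

lemma irrefl_double_edges_state: "H \<in> states \<Longrightarrow> (k, l) \<in> double_edges H \<Longrightarrow> k \<noteq> l"
  unfolding mem_states_iff double_edges_def irrefl_def by auto

lemma card_double_edges_state: "H \<in> states \<Longrightarrow> card (double_edges H) = card (double_edges E)"
  using card_double_edges_add_card_sym_closure[OF finite_state] E_in_states mem_states_iff
  by (metis add_right_cancel)

lemma card_single_edges_state:
  assumes "H \<in> states"
  shows "card (single_edges H) = card (single_edges E)"
proof -
  have "card (single_edges G) = card G - card (double_edges G)" if "G \<in> states" for G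
    using finite_state[OF that]
    by (simp add: single_edges_eq_Diff_converse double_edges_eq_Int_converse card_Diff_subset_Int)
  then show ?thesis
    using assms E_in_states card_double_edges_state[OF assms] mem_states_iff by simp
qed

lemma SEF_in_states:
  assumes "H \<in> states" "(i, j) \<in> single_edges H"
  shows "SEF i j H \<in> states"
  using assms SEF_sym_closure[OF assms(2)] card_SEF[OF finite_state assms(2)]
  unfolding mem_states_iff single_edges_def SEF_def irrefl_def by auto

lemma DEM_in_states:
  assumes "H \<in> states" "(i, j) \<in> single_edges H" "(k, l) \<in> double_edges H"
  shows "DEM k l i j H \<in> states"
  using assms DEM_sym_closure[OF assms(2,3) irrefl_double_edges_state[OF assms(1,3)]]
    card_DEM[OF finite_state assms(2,3)]
  unfolding mem_states_iff single_edges_def DEM_def irrefl_def by auto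

lemma stochastic_on_T_SEF: "stochastic_on states T_SEF"
  unfolding T_SEF_eq_move_kernel
  using finite_states finite_single_edges_state SEF_in_states
  by (intro stochastic_on_move_kernel) auto

lemma symmetric_on_T_SEF: "symmetric_on states T_SEF"
  unfolding T_SEF_eq_move_kernel
proof (rule symmetric_on_move_kernel[OF finite_single_edges_state _ swap_inj_on])
  show "card (single_edges H) = card (single_edges H')" if "H \<in> states" "H' \<in> states" for H H'
    using card_single_edges_state[OF that(1)] card_single_edges_state[OF that(2)] by simp
qed (auto dest: SEF_reverse)

lemma T_SEF_pos: "H \<in> states \<Longrightarrow> (i, j) \<in> single_edges H \<Longrightarrow> T_SEF H (SEF i j H) > 0"
  using move_kernel_pos[of single_edges H "(i, j)" "\<lambda>(i, j). SEF i j"] finite_single_edges_state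
  unfolding T_SEF_eq_move_kernel by simp

lemma stochastic_on_T_DEM: "stochastic_on states T_DEM"
  unfolding T_DEM_eq_move_kernel
  using finite_states finite_single_edges_state finite_double_edges_state DEM_in_states
  by (intro stochastic_on_move_kernel) auto

lemma symmetric_on_T_DEM: "symmetric_on states T_DEM"
proof -
  let ?L = "\<lambda>H. single_edges H \<times> double_edges H"
  let ?f = "\<lambda>((i, j), (k, l)). DEM k l i j"
  let ?r = "\<lambda>((i, j), (k, l)). ((l, k), (j, i))"
  have reverse: "?r m \<in> ?L (?f m H) \<and> ?f (?r m) (?f m H) = H" if "H \<in> states" "m \<in> ?L H" for H m
  proof -
    obtain i j k l where m: "m = ((i, j), (k, l))" by (cases m) auto
    have ij: "(i, j) \<in> single_edges H" and kl: "(k, l) \<in> double_edges H"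
      using that(2) unfolding m by auto
    show ?thesis
      using DEM_reverse[OF ij kl irrefl_double_edges_state[OF that(1) kl]] unfolding m by auto
  qed
  have card: "card (?L H) = card (?L H')" if "H \<in> states" "H' \<in> states" for H H'
    using card_single_edges_state[OF that(1)] card_single_edges_state[OF that(2)]
      card_double_edges_state[OF that(1)] card_double_edges_state[OF that(2)]
    by (simp add: card_cartesian_product)
  have fin: "finite (?L H)" if "H \<in> states" for H
    using finite_single_edges_state[OF that] finite_double_edges_state[OF that] by simp
  have inj: "inj_on ?r (?L H)" for H by (rule inj_onI) auto
  show ?thesis
    unfolding T_DEM_eq_move_kernel
    by (rule symmetric_on_move_kernel[where L = ?L and f = ?f and r = ?r, OF fin card inj reverse])
qed

lemma T_DEM_pos:
  "H \<in> states \<Longrightarrow> (i, j) \<in> single_edges H \<Longrightarrow> (k, l) \<in> double_edges H \<Longrightarrow> T_DEM H (DEM k l i j H) > 0"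
  using move_kernel_pos[of "\<lambda>H. single_edges H \<times> double_edges H" H "((i, j), (k, l))"
      "\<lambda>((i, j), (k, l)). DEM k l i j"]
    finite_single_edges_state finite_double_edges_state
  unfolding T_DEM_eq_move_kernel by simp

lemma exists_double_edge_not_in:
  assumes "x \<in> states" "y \<in> states" "(a, b) \<in> double_edges x" "(a, b) \<notin> double_edges y"
  obtains k l where "(k, l) \<in> double_edges y" "(k, l) \<notin> x"
proof -
  have "\<not> double_edges y \<subseteq> double_edges x"
    using assms card_subset_eq[OF finite_double_edges_state[OF assms(1)]]
      card_double_edges_state[OF assms(1)] card_double_edges_state[OF assms(2)] by metis
  then obtain k l where kl: "(k, l) \<in> double_edges y" "(k, l) \<notin> double_edges x" by auto
  then have "(l, k) \<in> double_edges y" "(k, l) \<notin> x \<or> (l, k) \<notin> x"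
    unfolding double_edges_def by auto
  then show ?thesis using that kl(1) by blast
qed

lemma exists_move_closer:
  assumes x: "x \<in> states" and y: "y \<in> states" and "x \<noteq> y"
  obtains (SEF) i j where "(i, j) \<in> single_edges y" "card (SEF i j y - x) < card (y - x)"
    | (DEM) i j k l where "(i, j) \<in> single_edges y" "(k, l) \<in> double_edges y"
        "card (DEM k l i j y - x) < card (y - x)"
proof -
  have "\<not> x \<subseteq> y"
    using assms card_subset_eq[OF finite_state[OF y]] mem_states_iff by metis
  then obtain a b where ab: "(a, b) \<in> x" "(a, b) \<notin> y" by auto
  have "(a, b) \<in> y \<union> y\<inverse>" using ab(1) x y mem_states_iff by blast
  then have ba: "(b, a) \<in> single_edges y" using ab(2) unfolding single_edges_def by auto
  have fin: "finite (y - x)" using finite_state[OF y] by simp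
  show ?thesis
  proof (cases "(b, a) \<in> x")
    case False
    then have "SEF b a y - x = (y - x) - {(b, a)}" "(b, a) \<in> y - x"
      using ab ba unfolding SEF_def single_edges_def by auto
    then show ?thesis using SEF[OF ba] card_Diff1_less[OF fin] by simp
  next
    case True
    then have "(a, b) \<in> double_edges x" "(a, b) \<notin> double_edges y"
      using ab unfolding double_edges_def by auto
    then obtain k l where kl: "(k, l) \<in> double_edges y" "(k, l) \<notin> x"
      using exists_double_edge_not_in[OF x y] by blast
    then have "DEM k l b a y - x = (y - x) - {(k, l)}" "(k, l) \<in> y - x"
      using ab unfolding DEM_def double_edges_def by auto
    then show ?thesis using DEM[OF ba kl(1)] card_Diff1_less[OF fin] by simp
  qed
qed

lemma max_clique_subset: "C \<in> max_cliques V E \<Longrightarrow> C \<subseteq> V"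
  unfolding max_cliques_def is_max_clique_def is_clique_def by blast

lemma finite_max_clique: "C \<in> max_cliques V E \<Longrightarrow> finite C"
  using max_clique_subset finite_V finite_subset by blast

lemma finite_max_cliques: "finite (max_cliques V E)"
  using max_clique_subset finite_V by (meson Pow_iff finite_Pow_iff finite_subset subsetI)

lemma max_clique_complete:
  assumes "C \<in> max_cliques V E" "H \<in> states" "u \<in> C" "v \<in> C" "u \<noteq> v"
  shows "(u, v) \<in> H \<union> H\<inverse>"
proof -
  have "{u, v} \<in> pr_edges E"
    using assms unfolding max_cliques_def is_max_clique_def is_clique_def by blast
  then show ?thesis using assms(2) by (simp add: mem_pr_edges_iff mem_states_iff)
qed

lemma CS_in_states:
  assumes H: "H \<in> states" and cliques: "V1 \<in> max_cliques V E" "V2 \<in> max_cliques V E"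
    and \<pi>: "\<pi> \<in> swap_perms V1 V2"
  shows "CS \<pi> V1 V2 H \<in> states"
proof -
  define R where "R = V1 \<times> V1 \<union> V2 \<times> V2"
  have bij: "bij \<pi>" using \<pi> permutes_bij unfolding swap_perms_def by blast
  have R: "map_prod \<pi> \<pi> ` R = R" "sym R" "R \<subseteq> V \<times> V"
    using swap_perms_blocks[OF \<pi>] max_clique_subset[OF cliques(1)] max_clique_subset[OF cliques(2)]
    unfolding R_def sym_def by auto
  have complete: "(u, v) \<in> H \<union> H\<inverse>" if "(u, v) \<in> R" "u \<noteq> v" for u v
    using that max_clique_complete[OF cliques(1) H] max_clique_complete[OF cliques(2) H]
    unfolding R_def by blast
  have H': "H \<subseteq> V \<times> V" "irrefl H" "H \<union> H\<inverse> = E \<union> E\<inverse>" "card H = card E"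
    using H mem_states_iff by auto
  have "relabel_on \<pi> R H \<subseteq> H \<union> R" using R(1) unfolding relabel_on_def by blast
  then show ?thesis
    unfolding CS_eq_relabel_on R_def[symmetric] mem_states_iff
    using H' R(3) irrefl_relabel_on[OF bij_is_inj[OF bij] H'(2)]
      relabel_on_sym_closure[OF bij R(1,2) H'(2) complete]
      card_relabel_on[OF bij R(1) finite_state[OF H]]
    by auto
qed

lemma CS_inverse:
  assumes "\<pi> \<in> swap_perms V1 V2"
  shows "CS (inv \<pi>) V1 V2 (CS \<pi> V1 V2 H) = H"
proof -
  have "bij \<pi>" using assms permutes_bij unfolding swap_perms_def by blast
  then show ?thesis
    unfolding CS_eq_relabel_on by (rule relabel_on_inv[OF _ swap_perms_blocks[OF assms]])
qed

lemma finite_swap_perms_max_cliques: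
  "V1 \<in> max_cliques V E \<Longrightarrow> V2 \<in> max_cliques V E \<Longrightarrow> finite (swap_perms V1 V2)"
  using finite_swap_perms finite_max_clique by blast

lemma stochastic_on_clique_swap_kernel:
  assumes "V1 \<in> max_cliques V E" "V2 \<in> max_cliques V E"
  shows "stochastic_on states (clique_swap_kernel V1 V2)"
  unfolding clique_swap_kernel_def
  using finite_swap_perms_max_cliques[OF assms] CS_in_states[OF _ assms]
  by (intro stochastic_on_move_kernel[OF finite_states]) simp_all

lemma symmetric_on_clique_swap_kernel:
  assumes "V1 \<in> max_cliques V E" "V2 \<in> max_cliques V E"
  shows "symmetric_on states (clique_swap_kernel V1 V2)"
proof -
  have inj: "inj_on inv (swap_perms V1 V2)"
  proof (rule inj_onI)
    fix \<sigma> \<tau> assume "\<sigma> \<in> swap_perms V1 V2" "\<tau> \<in> swap_perms V1 V2" and eq: "inv \<sigma> = inv \<tau>"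
    then have "\<sigma> permutes (V1 \<union> V2)" "\<tau> permutes (V1 \<union> V2)" unfolding swap_perms_def by auto
    then show "\<sigma> = \<tau>" using permutes_inv_inv eq by metis
  qed
  have reverse: "inv \<pi> \<in> swap_perms V1 V2 \<and> CS (inv \<pi>) V1 V2 (CS \<pi> V1 V2 H) = H"
    if "\<pi> \<in> swap_perms V1 V2" for \<pi> H
    using inv_in_swap_perms[OF that] CS_inverse[OF that] by blast
  show ?thesis
    unfolding clique_swap_kernel_def
    by (rule symmetric_on_move_kernel[where L = "\<lambda>_. swap_perms V1 V2" and f = "\<lambda>\<pi>. CS \<pi> V1 V2",
          OF finite_swap_perms_max_cliques[OF assms] refl inj reverse])
qed

lemma clique_swap_kernel_refl_pos:
  assumes "C \<in> max_cliques V E"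
  shows "clique_swap_kernel C C H H > 0"
proof -
  have "CS id C C H = H" unfolding CS_eq_relabel_on relabel_on_def by (auto simp: map_prod.id)
  moreover have "id \<in> swap_perms C C" by (simp add: swap_perms_self permutes_id)
  ultimately show ?thesis
    using move_kernel_pos[of "\<lambda>_. swap_perms C C" H id "\<lambda>\<pi>. CS \<pi> C C"]
      finite_swap_perms_max_cliques[OF assms assms]
    unfolding clique_swap_kernel_def by simp
qed

lemma finite_clique_sizes: "finite (clique_sizes V E)"
  unfolding clique_sizes_def using finite_max_cliques by simp

lemma finite_max_cliques_of_size: "finite (max_cliques_of_size V E d)"
  unfolding max_cliques_of_size_def using finite_max_cliques by simp

lemma max_cliques_of_size_nonempty: "d \<in> clique_sizes V E \<Longrightarrow> max_cliques_of_size V E d \<noteq> {}"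
  unfolding clique_sizes_def max_cliques_of_size_def by auto

lemma mem_max_cliques_of_size:
  "C \<in> max_cliques_of_size V E d \<Longrightarrow> C \<in> max_cliques V E \<and> card C = d"
  unfolding max_cliques_of_size_def by simp

lemma T_CS_eq_mixture:
  "T_CS V E p H H' = (\<Sum>d\<in>clique_sizes V E. p d *
     (\<Sum>c\<in>max_cliques_of_size V E d \<times> max_cliques_of_size V E d.
        (1 / real (card (max_cliques_of_size V E d))) ^ 2 * clique_swap_kernel (fst c) (snd c) H H'))"
proof -
  have kernel: "real (card {\<pi> \<in> swap_perms V1 V2. CS \<pi> V1 V2 H = H'}) / real (card (swap_perms V1 V2))
      = clique_swap_kernel V1 V2 H H'"
    if "V1 \<in> max_cliques_of_size V E d" "V2 \<in> max_cliques_of_size V E d" for d V1 V2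
  proof -
    \<comment> \<open>otherwise T_CS would divide by zero where move_kernel stays put\<close>
    have "swap_perms V1 V2 \<noteq> {}"
      using that mem_max_cliques_of_size finite_max_clique by (intro swap_perms_nonempty) auto
    then show ?thesis unfolding clique_swap_kernel_def move_kernel_def by simp
  qed
  show ?thesis
    unfolding T_CS_def sum.cartesian_product'
    by (auto simp: kernel power_one_over intro!: sum.cong)
qed

end

section \<open>The chain\<close>

lemma T_u_eq_mixture:
  "T_u V E p a b c d = (\<lambda>H H'. \<Sum>i<4. [a, b, c, d] ! i * ([T_SEF, T_DEM, T_CP V E p, T_CS V E p] ! i) H H')"
  by (simp add: fun_eq_iff T_u_def eval_nat_numeral add.assoc)

locale orientation_chain = orientation_space +
  fixes p :: "nat \<Rightarrow> real" and pSEF pDEM pCP pCS :: real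
  assumes p_nonneg: "\<forall>d\<in>clique_sizes V E. p d \<ge> 0"
    and p_sum: "(\<Sum>d\<in>clique_sizes V E. p d) = 1"
    and move_probs_pos: "pSEF > 0" "pDEM > 0" "pCP > 0" "pCS > 0"
    and move_probs_sum: "pSEF + pDEM + pCP + pCS = 1"
begin

abbreviation T :: "('a \<times> 'a) set \<Rightarrow> ('a \<times> 'a) set \<Rightarrow> real" where
  "T \<equiv> T_u V E p pSEF pDEM pCP pCS"

lemma sum_uniform_clique_weights:
  "d \<in> clique_sizes V E \<Longrightarrow> (\<Sum>C\<in>max_cliques_of_size V E d. 1 / real (card (max_cliques_of_size V E d))) = 1"
  using finite_max_cliques_of_size max_cliques_of_size_nonempty by simp

lemma stochastic_on_clique_size_component:
  assumes "d \<in> clique_sizes V E"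
  shows "stochastic_on states (\<lambda>H H'. \<Sum>C\<in>max_cliques_of_size V E d.
    1 / real (card (max_cliques_of_size V E d)) * clique_swap_kernel C C H H')"
  by (rule stochastic_on_mixture)
    (use sum_uniform_clique_weights[OF assms] finite_max_cliques_of_size
      stochastic_on_clique_swap_kernel mem_max_cliques_of_size in auto)

lemma stochastic_on_T_CP: "stochastic_on states (T_CP V E p)"
  unfolding T_CP_eq_mixture[abs_def]
  by (rule stochastic_on_mixture)
    (use finite_clique_sizes p_nonneg p_sum stochastic_on_clique_size_component in auto)

lemma symmetric_on_T_CP: "symmetric_on states (T_CP V E p)"
  unfolding T_CP_eq_mixture[abs_def]
  by (intro symmetric_on_mixture)
    (use symmetric_on_clique_swap_kernel mem_max_cliques_of_size in auto)

lemma T_CP_refl_pos: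
  assumes H: "H \<in> states"
  shows "T_CP V E p H H > 0"
proof -
  obtain d where d: "d \<in> clique_sizes V E" "p d > 0"
    using p_nonneg p_sum sum_nonpos[of "clique_sizes V E" p] by force
  then obtain C where C: "C \<in> max_cliques_of_size V E d"
    using max_cliques_of_size_nonempty by blast
  let ?n = "real (card (max_cliques_of_size V E d))"
  have "(\<Sum>C\<in>max_cliques_of_size V E d. 1 / ?n * clique_swap_kernel C C H H) > 0"
    using mem_max_cliques_of_size finite_max_cliques_of_size C H
      stochastic_on_clique_swap_kernel clique_swap_kernel_refl_pos
    by (intro mixture_pos[of _ "\<lambda>_. 1 / ?n" states "\<lambda>C. clique_swap_kernel C C" H C H])
      (auto simp: card_gt_0_iff)
  then show ?thesis
    unfolding T_CP_eq_mixture
    using finite_clique_sizes p_nonneg stochastic_on_clique_size_component H d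
    by (intro mixture_pos[of _ p states _ H d H]) auto
qed

lemma stochastic_on_T_CS: "stochastic_on states (T_CS V E p)"
proof -
  have inner: "stochastic_on states (\<lambda>H H'. \<Sum>c\<in>max_cliques_of_size V E d \<times> max_cliques_of_size V E d.
      (1 / real (card (max_cliques_of_size V E d))) ^ 2 * clique_swap_kernel (fst c) (snd c) H H')"
    if "d \<in> clique_sizes V E" for d
    by (rule stochastic_on_mixture)
      (use that finite_max_cliques_of_size max_cliques_of_size_nonempty
        stochastic_on_clique_swap_kernel mem_max_cliques_of_size
        in \<open>auto simp: card_cartesian_product power_one_over power2_eq_square\<close>)
  show ?thesis
    unfolding T_CS_eq_mixture[abs_def]
    by (rule stochastic_on_mixture) (use finite_clique_sizes p_nonneg p_sum inner in auto)
qed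

lemma symmetric_on_T_CS: "symmetric_on states (T_CS V E p)"
  unfolding T_CS_eq_mixture[abs_def]
  by (intro symmetric_on_mixture)
    (use symmetric_on_clique_swap_kernel mem_max_cliques_of_size in auto)

lemma stochastic_on_T: "stochastic_on states T"
proof -
  have "stochastic_on states ([T_SEF, T_DEM, T_CP V E p, T_CS V E p] ! i)" if "i < 4" for i
    using that stochastic_on_T_SEF stochastic_on_T_DEM stochastic_on_T_CP stochastic_on_T_CS
    by (auto simp: less_Suc_eq numeral_eq_Suc)
  moreover have "0 \<le> [pSEF, pDEM, pCP, pCS] ! i" if "i < 4" for i
    using that move_probs_pos by (auto simp: less_Suc_eq numeral_eq_Suc)
  ultimately show ?thesis
    unfolding T_u_eq_mixture
    by (intro stochastic_on_mixture) (use move_probs_sum in \<open>simp_all add: eval_nat_numeral add.assoc\<close>)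
qed

lemma symmetric_on_T: "symmetric_on states T"
  unfolding symmetric_on_def T_u_def
  using symmetric_on_T_SEF symmetric_on_T_DEM symmetric_on_T_CP symmetric_on_T_CS
  by (simp add: symmetric_on_def)

lemma T_posI:
  assumes H: "H \<in> states" and "T_SEF H H' > 0 \<or> T_DEM H H' > 0 \<or> T_CP V E p H H' > 0"
  shows "T H H' > 0"
proof -
  have "0 \<le> T_SEF H H'" "0 \<le> T_DEM H H'" "0 \<le> T_CP V E p H H'" "0 \<le> T_CS V E p H H'"
    using stochastic_on_T_SEF stochastic_on_T_DEM stochastic_on_T_CP stochastic_on_T_CS H
    by (auto dest: stochastic_onD(2))
  then show ?thesis
    unfolding T_u_def using assms(2) move_probs_pos
    by (smt (verit) mult_nonneg_nonneg mult_pos_pos)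
qed

lemma irreducible_T: "irreducible_chain states T"
proof (rule irreducible_chainI_descent[OF stochastic_on_T, where d = "\<lambda>x z. card (z - x)"])
  fix x y assume x: "x \<in> states" and y: "y \<in> states" and "x \<noteq> y"
  then show "\<exists>z\<in>states. T z y > 0 \<and> card (z - x) < card (y - x)"
  proof (cases rule: exists_move_closer)
    case (SEF i j)
    then have "SEF i j y \<in> states" "T y (SEF i j y) > 0"
      using SEF_in_states T_SEF_pos T_posI y by auto
    then show ?thesis using SEF symmetric_on_T y unfolding symmetric_on_def by metis
  next
    case (DEM i j k l)
    then have "DEM k l i j y \<in> states" "T y (DEM k l i j y) > 0"
      using DEM_in_states T_DEM_pos T_posI y by auto
    then show ?thesis using DEM symmetric_on_T y unfolding symmetric_on_def by metis
  qed
qed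

lemma aperiodic_T: "aperiodic_chain states T"
  using T_posI T_CP_refl_pos by (intro aperiodic_chainI_self_loops[OF stochastic_on_T]) blast

end

theorem corollary3p11:
  fixes V :: "'a set" and E :: "('a \<times> 'a) set" and p :: "nat \<Rightarrow> real"
    and pSEF pDEM pCP pCS :: real
  assumes "simple_digraph V E"
    and "double_edges E \<noteq> {}"
    and "\<forall>d\<in>clique_sizes V E. p d \<ge> 0"
    and "(\<Sum>d\<in>clique_sizes V E. p d) = 1"
    and "pSEF > 0" "pDEM > 0" "pCP > 0" "pCS > 0"
    and "pSEF + pDEM + pCP + pCS = 1"
  shows "E \<in> G0inf V E
    \<and> stochastic_on (G0inf V E) (T_u V E p pSEF pDEM pCP pCS)
    \<and> ergodic_chain (G0inf V E) (T_u V E p pSEF pDEM pCP pCS)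
    \<and> stationary_distribution (G0inf V E) (T_u V E p pSEF pDEM pCP pCS)
        (\<lambda>H. 1 / real (card (G0inf V E)))"
proof -
  interpret orientation_chain V E p pSEF pDEM pCP pCS
    using assms(1,3-) by unfold_locales auto
  have "G0inf V E \<noteq> {}" using E_in_states by blast
  then show ?thesis
    using E_in_states stochastic_on_T irreducible_T aperiodic_T
      stationary_distribution_uniform[OF stochastic_on_T symmetric_on_T]
    unfolding ergodic_chain_def by blast
qed

end
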